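(* Let $(\tau,\{\mathbf R_s\}_{s\in\mathcal S})$ be a feasible TWAVRP solution. Then there exist arrival-time vectors $\bm a_s\in\mathcal X(\mathbf R_s,[e,\ell];\theta_s)$, $s\in\mathcal S$, such that (i) for every $i\in V_{\mathrm{cont}}$ and every $\beta\in\mathbb R$: either $a_{si}\le \beta+w_i/2$ for all $s\in\mathcal S$, or $a_{si}\ge \beta-w_i/2$ for all $s\in\mathcal S$; and (ii) for every $i\in V_{\mathrm{disc}}$ and every $b\in\{1,\dots,N_i-1\}$: either $a_{si}\le \bar y_{ib}$ for all $s\in\mathcal S$, or $a_{si}\ge \underline y_{i,b+1}$ for all $s\in\mathcal S$.
   Context: Let $G=(V,A)$ be a directed graph with $V=\{0,1,\dots,n\}$; node $0$ is the depot and $V_C=V\setminus\{0\}$ is the set of customers. The depot has operating window $[e_0,\ell_0]$, vehicles have capacity $Q$, and each customer $i\in V_C$ has an exogenous time window $[e_i,\ell_i]$. A vector of operational parameters $\theta$ consists of arc costs $c_{ij}\ge 0$ and arc travel times $t_{ij}\ge0$ for $(i,j)\in A$, and demands $q_i\ge 0$ and service times $u_i\ge 0$ for $i\in V_C$. The customer set is partitioned as $V_C=V_{\mathrm{cont}}\cup V_{\mathrm{disc}}$ (disjoint). For $i\in V_{\mathrm{cont}}$ a width $w_i\ge0$ with $e_i\le \ell_i-w_i$ is given and $TW_i=\{[y,y+w_i]: e_i\le y\le \ell_i-w_i\}$. For $i\in V_{\mathrm{disc}}$, $TW_i=\{[\underline y_{i1},\bar y_{i1}],\dots,[\underline y_{iN_i},\bar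 y_{iN_i}]\}$ is a finite set of intervals with $\underline y_{ib}\le\bar y_{ib}$, none contained in another, ordered so that $e_i=\underline y_{i1}<\dots<\underline y_{iN_i}$ and $\bar y_{i1}<\dots<\bar y_{iN_i}=\ell_i$. A route set $\mathbf R=(R_1,\dots,R_m)$ is a collection of pairwise disjoint nonempty sequences $R_k=(R_{k,1},\dots,R_{k,n_k})$ of distinct customers (every customer with positive demand appearing in exactly one sequence). For a vector $\tau=(\tau_1,\dots,\tau_n)$ of closed intervals, $\mathcal X(\mathbf R,\tau;\theta)$ is the set of $\bm a\in\mathbb R^n_{\ge0}$ with: $a_{R_{k,1}}\ge e_0+t_{0,R_{k,1}}$ for all $k$; $a_{R_{k,l+1}}-a_{R_{k,l}}\ge t_{R_{k,l},R_{k,l+1}}+u_{R_{k,l}}$ for all $k$ and $1\le l\le n_k-1$; $a_{R_{k,n_k}}\le \ell_0-t_{R_{k,n_k},0}-u_{R_{k,n_k}}$ for all $k$; and $a_i\in\tau_i$ for all $i\in V_C$. We write $\mathbf R\in\mathcal R(\tau;\theta)$ if $\sum_{i\in R_k}q_i\le Q$ for every $k$ and $\mathcal X(\mathbf R,\tau;\theta)\neq\emptyset$. Finitely many scenarios $\theta_1,\dots,\theta_S$ are given, $\mathcal S=\{1,\dots,S\}$. A feasible TWAVRP solution is a pair $(\tau,\{\mathbf R_s\}_{s\in\mathcal S})$ with $\tau_i\in TW_i$ for all $i\in V_C$ and $\mathbf R_s\in\mathcal R(\tau;\theta_s)$ for all $s$. $[e,\ell]$ denotes the vector $([e_1,\ell_1],\dots,[e_n,\ell_n])$,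 and $a_{si}$ denotes the $i$-th component of $\bm a_s$. *)

theory Defs
  imports Complex_Main
begin

text \<open>Operational parameters theta: arc costs c, arc travel times t (indexed by
  node pairs, node 0 = depot), customer demands q and service times u.\<close>
record theta =
  cost :: "nat \<Rightarrow> nat \<Rightarrow> real"
  ttime :: "nat \<Rightarrow> nat \<Rightarrow> real"
  dem :: "nat \<Rightarrow> real"
  serv :: "nat \<Rightarrow> real"

definition ival :: "real \<times> real \<Rightarrow> real set" where
  "ival p = {fst p .. snd p}"

definition route_set :: "nat \<Rightarrow> (nat \<Rightarrow> real) \<Rightarrow> nat list list \<Rightarrow> bool" where
  "route_set n q Rs \<longleftrightarrow>
     (\<forall>k < length Rs. Rs ! k \<noteq> [] \<and> distinct (Rs ! k) \<and> set (Rs ! k) \<subseteq> {1..n}) \<and>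
     (\<forall>k < length Rs. \<forall>k' < length Rs. k \<noteq> k' \<longrightarrow> set (Rs ! k) \<inter> set (Rs ! k') = {}) \<and>
     (\<forall>i \<in> {1..n}. q i > 0 \<longrightarrow> (\<exists>k < length Rs. i \<in> set (Rs ! k)))"

definition arrX :: "nat \<Rightarrow> real \<Rightarrow> real \<Rightarrow> nat list list \<Rightarrow> (nat \<Rightarrow> real \<times> real)
                    \<Rightarrow> theta \<Rightarrow> (nat \<Rightarrow> real) set" where
  "arrX n e0 l0 Rs \<tau> th = {a.
     (\<forall>i \<in> {1..n}. a i \<ge> 0) \<and>
     (\<forall>k < length Rs. a (hd (Rs ! k)) \<ge> e0 + ttime th 0 (hd (Rs ! k))) \<and>
     (\<forall>k < length Rs. \<forall>l. 1 \<le> l \<and> l \<le> length (Rs ! k) - 1 \<longrightarrow>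
         a (Rs ! k ! l) - a (Rs ! k ! (l - 1))
           \<ge> ttime th (Rs ! k ! (l - 1)) (Rs ! k ! l) + serv th (Rs ! k ! (l - 1))) \<and>
     (\<forall>k < length Rs. a (last (Rs ! k)) \<le> l0 - ttime th (last (Rs ! k)) 0 - serv th (last (Rs ! k))) \<and>
     (\<forall>i \<in> {1..n}. a i \<in> ival (\<tau> i))}"

definition feasible_routes :: "nat \<Rightarrow> real \<Rightarrow> real \<Rightarrow> real \<Rightarrow> (nat \<Rightarrow> real \<times> real)
                               \<Rightarrow> theta \<Rightarrow> nat list list \<Rightarrow> bool" where
  "feasible_routes n e0 l0 Q \<tau> th Rs \<longleftrightarrow>
     route_set n (dem th) Rs \<and>
     (\<forall>k < length Rs. (\<Sum>i \<in> set (Rs ! k). dem th i) \<le> Q) \<and>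
     arrX n e0 l0 Rs \<tau> th \<noteq> {}"

definition TW_cont :: "real \<Rightarrow> real \<Rightarrow> real \<Rightarrow> (real \<times> real) set" where
  "TW_cont e l w = {(y, y + w) | y. e \<le> y \<and> y \<le> l - w}"

definition TW_disc :: "nat \<Rightarrow> (nat \<Rightarrow> real) \<Rightarrow> (nat \<Rightarrow> real) \<Rightarrow> (real \<times> real) set" where
  "TW_disc N ylo yhi = {(ylo b, yhi b) | b. b \<in> {1..N}}"

end

theory Submission
  imports Defs
begin

text \<open>Any arrival times feasible for the assigned windows \<open>\<tau>\<close> work. In every scenario the
  arrival time at customer i lies in the same window \<open>\<tau> i\<close>, which is contained in \<open>[e i, l i]\<close>.
  A continuous window \<open>[y, y + w]\<close> lies below \<open>\<beta> + w/2\<close> or above \<open>\<beta> - w/2\<close> according as its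
  midpoint is \<open>\<le> \<beta>\<close> or not; the discrete window with index \<open>b\<^sub>0\<close> lies below \<open>yhi b\<close> if
  \<open>b\<^sub>0 \<le> b\<close> and above \<open>ylo (b + 1)\<close> otherwise, by monotonicity of the window ends.\<close>

lemma le_of_succ_less_chain:
  fixes f :: "nat \<Rightarrow> 'a :: order"
  assumes "\<forall>b \<in> {1..<N}. f b < f (b + 1)" "1 \<le> b" "b \<le> b'" "b' \<le> N"
  shows "f b \<le> f b'"
  using assms(3,4)
proof (induction b' rule: dec_induct)
  case base
  then show ?case by simp
next
  case (step m)
  then have "f m < f (m + 1)" using assms(1,2) by auto
  with step show ?case by simp
qed

lemma arrX_mono:
  assumes "\<forall>i \<in> {1..n}. ival (\<tau> i) \<subseteq> ival (\<tau>' i)"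
  shows "arrX n e0 l0 Rs \<tau> th \<subseteq> arrX n e0 l0 Rs \<tau>' th"
  using assms unfolding arrX_def by blast

lemma TW_cont_subset:
  assumes "p \<in> TW_cont e l w" "0 \<le> w"
  shows "ival p \<subseteq> {e..l}"
  using assms unfolding TW_cont_def ival_def by auto

lemma TW_disc_subset:
  assumes "p \<in> TW_disc N ylo yhi"
    and "\<forall>b \<in> {1..<N}. ylo b < ylo (b + 1)" "\<forall>b \<in> {1..<N}. yhi b < yhi (b + 1)"
  shows "ival p \<subseteq> {ylo 1..yhi N}"
proof -
  obtain b where b: "b \<in> {1..N}" "p = (ylo b, yhi b)"
    using assms(1) unfolding TW_disc_def by blast
  have "ylo 1 \<le> ylo b" using le_of_succ_less_chain[OF assms(2)] b(1) by auto
  moreover have "yhi b \<le> yhi N" using le_of_succ_less_chain[OF assms(3)] b(1) by auto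
  ultimately show ?thesis using b(2) unfolding ival_def by auto
qed

lemma all_below_or_all_above:
  assumes "\<forall>s \<in> A. x s \<in> I" "I \<subseteq> {..u} \<or> I \<subseteq> {v..}"
  shows "(\<forall>s \<in> A. x s \<le> u) \<or> (\<forall>s \<in> A. v \<le> x s)"
  using assms by auto

lemma interval_below_or_above_half_width:
  fixes y w \<beta> :: real
  shows "{y..y + w} \<subseteq> {..\<beta> + w / 2} \<or> {y..y + w} \<subseteq> {\<beta> - w / 2..}"
  by (cases "y + w / 2 \<le> \<beta>") auto

lemma TW_cont_below_or_above_half_width:
  assumes "p \<in> TW_cont e l w"
  shows "ival p \<subseteq> {..\<beta> + w / 2} \<or> ival p \<subseteq> {\<beta> - w / 2..}"
  using assms interval_below_or_above_half_width
  unfolding TW_cont_def ival_def by auto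

lemma TW_disc_below_or_above_gap:
  assumes "p \<in> TW_disc N ylo yhi" "b \<in> {1..<N}"
    and "\<forall>b \<in> {1..<N}. ylo b < ylo (b + 1)" "\<forall>b \<in> {1..<N}. yhi b < yhi (b + 1)"
  shows "ival p \<subseteq> {..yhi b} \<or> ival p \<subseteq> {ylo (b + 1)..}"
proof -
  obtain b0 where b0: "b0 \<in> {1..N}" "p = (ylo b0, yhi b0)"
    using assms(1) unfolding TW_disc_def by blast
  show ?thesis
  proof (cases "b0 \<le> b")
    case True
    then have "yhi b0 \<le> yhi b" using le_of_succ_less_chain[OF assms(4)] b0(1) assms(2) by auto
    then show ?thesis using b0(2) unfolding ival_def by auto
  next
    case False
    then have "ylo (b + 1) \<le> ylo b0" using le_of_succ_less_chain[OF assms(3)] b0(1) assms(2) by auto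
    then show ?thesis using b0(2) unfolding ival_def by auto
  qed
qed

theorem mainTheorem1:
  fixes n S :: nat
    and e0 l0 Q :: real
    and e l :: "nat \<Rightarrow> real"
    and \<Theta> :: "nat \<Rightarrow> theta"
    and Vcont Vdisc :: "nat set"
    and w :: "nat \<Rightarrow> real"
    and N :: "nat \<Rightarrow> nat"
    and ylo yhi :: "nat \<Rightarrow> nat \<Rightarrow> real"
    and \<tau> :: "nat \<Rightarrow> real \<times> real"
    and Rsol :: "nat \<Rightarrow> nat list list"
  assumes params_nonneg: "\<forall>s \<in> {1..S}.
        (\<forall>i j. cost (\<Theta> s) i j \<ge> 0 \<and> ttime (\<Theta> s) i j \<ge> 0) \<and>
        (\<forall>i \<in> {1..n}. dem (\<Theta> s) i \<ge> 0 \<and> serv (\<Theta> s) i \<ge> 0)"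
    and partition: "Vcont \<union> Vdisc = {1..n}" "Vcont \<inter> Vdisc = {}"
    and cont_w: "\<forall>i \<in> Vcont. w i \<ge> 0 \<and> e i \<le> l i - w i"
    and disc_N: "\<forall>i \<in> Vdisc. N i \<ge> 1"
    and disc_le: "\<forall>i \<in> Vdisc. \<forall>b \<in> {1..N i}. ylo i b \<le> yhi i b"
    and disc_nocontain: "\<forall>i \<in> Vdisc. \<forall>b \<in> {1..N i}. \<forall>b' \<in> {1..N i}. b \<noteq> b' \<longrightarrow>
            \<not> ({ylo i b .. yhi i b} \<subseteq> {ylo i b' .. yhi i b'})"
    and disc_lo_mono: "\<forall>i \<in> Vdisc. \<forall>b \<in> {1..<N i}. ylo i b < ylo i (b + 1)"
    and disc_hi_mono: "\<forall>i \<in> Vdisc. \<forall>b \<in> {1..<N i}. yhi i b < yhi i (b + 1)"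
    and disc_ends: "\<forall>i \<in> Vdisc. ylo i 1 = e i \<and> yhi i (N i) = l i"
    and tw_cont: "\<forall>i \<in> Vcont. \<tau> i \<in> TW_cont (e i) (l i) (w i)"
    and tw_disc: "\<forall>i \<in> Vdisc. \<tau> i \<in> TW_disc (N i) (ylo i) (yhi i)"
    and routes: "\<forall>s \<in> {1..S}. feasible_routes n e0 l0 Q \<tau> (\<Theta> s) (Rsol s)"
  shows "\<exists>a :: nat \<Rightarrow> nat \<Rightarrow> real.
     (\<forall>s \<in> {1..S}. a s \<in> arrX n e0 l0 (Rsol s) (\<lambda>i. (e i, l i)) (\<Theta> s)) \<and>
     (\<forall>i \<in> Vcont. \<forall>\<beta> :: real.
        (\<forall>s \<in> {1..S}. a s i \<le> \<beta> + w i / 2) \<or> (\<forall>s \<in> {1..S}. a s i \<ge> \<beta> - w i / 2)) \<and>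
     (\<forall>i \<in> Vdisc. \<forall>b \<in> {1..<N i}.
        (\<forall>s \<in> {1..S}. a s i \<le> yhi i b) \<or> (\<forall>s \<in> {1..S}. a s i \<ge> ylo i (b + 1)))"
proof -
  define a where "a = (\<lambda>s. SOME x. x \<in> arrX n e0 l0 (Rsol s) \<tau> (\<Theta> s))"
  have a_feasible: "a s \<in> arrX n e0 l0 (Rsol s) \<tau> (\<Theta> s)" if "s \<in> {1..S}" for s
    using routes that unfolding a_def feasible_routes_def by (metis some_in_eq)
  have a_in_window: "a s i \<in> ival (\<tau> i)" if "s \<in> {1..S}" "i \<in> {1..n}" for s i
    using a_feasible[OF that(1)] that(2) unfolding arrX_def by blast
  have window_in_horizon: "ival (\<tau> i) \<subseteq> ival (e i, l i)" if "i \<in> {1..n}" for i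
  proof (cases "i \<in> Vcont")
    case True
    then show ?thesis
      using TW_cont_subset tw_cont cont_w unfolding ival_def[of "(e i, l i)"] by fastforce
  next
    case False
    then have "i \<in> Vdisc" using that partition by blast
    then show ?thesis
      using TW_disc_subset tw_disc disc_lo_mono disc_hi_mono disc_ends
      unfolding ival_def[of "(e i, l i)"] by fastforce
  qed
  have "arrX n e0 l0 Rs \<tau> th \<subseteq> arrX n e0 l0 Rs (\<lambda>i. (e i, l i)) th" for Rs th
    using window_in_horizon by (intro arrX_mono) blast
  then have "\<forall>s \<in> {1..S}. a s \<in> arrX n e0 l0 (Rsol s) (\<lambda>i. (e i, l i)) (\<Theta> s)"
    using a_feasible by blast
  moreover have "(\<forall>s \<in> {1..S}. a s i \<le> \<beta> + w i / 2) \<or> (\<forall>s \<in> {1..S}. a s i \<ge> \<beta> - w i / 2)"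
    if "i \<in> Vcont" for i \<beta>
  proof -
    have "ival (\<tau> i) \<subseteq> {..\<beta> + w i / 2} \<or> ival (\<tau> i) \<subseteq> {\<beta> - w i / 2..}"
      using TW_cont_below_or_above_half_width tw_cont that by blast
    moreover have "i \<in> {1..n}" using that partition by blast
    ultimately show ?thesis using a_in_window by (intro all_below_or_all_above) auto
  qed
  moreover have "(\<forall>s \<in> {1..S}. a s i \<le> yhi i b) \<or> (\<forall>s \<in> {1..S}. a s i \<ge> ylo i (b + 1))"
    if "i \<in> Vdisc" "b \<in> {1..<N i}" for i b
  proof -
    have "ival (\<tau> i) \<subseteq> {..yhi i b} \<or> ival (\<tau> i) \<subseteq> {ylo i (b + 1)..}"
      using TW_disc_below_or_above_gap tw_disc disc_lo_mono disc_hi_mono that by blast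
    moreover have "i \<in> {1..n}" using that partition by blast
    ultimately show ?thesis using a_in_window by (intro all_below_or_all_above) auto
  qed
  ultimately show ?thesis by blast
qed

end
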